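(* Let $G$ and $H$ be word-representable graphs, with $H$ rooted at some vertex. Then $l(G \circ H) \le |H|\,l(G) + |G|\,l(H) + (|H|-1)\kappa_G$, where $\kappa_G$ is the size of a maximum clique of $G$.
   Context: All graphs are simple and undirected; $|G|$ denotes the number of vertices of $G$. Letters $x,y$ alternate in a word $w$ if deleting all other letters from $w$ yields $xyxy\ldots$ or $yxyx\ldots$ (of either parity). A word $w$ over $V(G)$ represents $G$ if every vertex occurs in $w$ and for all distinct $x,y$, $xy\in E(G)$ iff $x,y$ alternate in $w$; $G$ is word-representable if such a word exists, and $l(G)$ is the minimum length of a word representing $G$. For a graph $G$ and a rooted graph $H$, the rooted product $G\circ H$ is obtained by taking $|V(G)|$ disjoint copies of $H$, one for each vertex $v$ of $G$, and identifying each vertex $v$ of $G$ with the root of its copy of $H$. *)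

theory Defs
  imports Main
begin

definition simple_graph :: "'a set \<Rightarrow> ('a \<Rightarrow> 'a \<Rightarrow> bool) \<Rightarrow> bool" where
  "simple_graph V E \<longleftrightarrow> finite V \<and> (\<forall>x y. E x y \<longrightarrow> E y x) \<and> (\<forall>x. \<not> E x x)
     \<and> (\<forall>x y. E x y \<longrightarrow> x \<in> V \<and> y \<in> V)"

definition alternate :: "'a list \<Rightarrow> 'a \<Rightarrow> 'a \<Rightarrow> bool" where
  "alternate w x y \<longleftrightarrow>
     (let u = filter (\<lambda>z. z = x \<or> z = y) w in
        \<forall>i. Suc i < length u \<longrightarrow> u ! i \<noteq> u ! Suc i)"

definition represents :: "'a set \<Rightarrow> ('a \<Rightarrow> 'a \<Rightarrow> bool) \<Rightarrow> 'a list \<Rightarrow> bool" where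
  "represents V E w \<longleftrightarrow> set w = V \<and>
     (\<forall>x\<in>V. \<forall>y\<in>V. x \<noteq> y \<longrightarrow> (E x y \<longleftrightarrow> alternate w x y))"

definition word_representable :: "'a set \<Rightarrow> ('a \<Rightarrow> 'a \<Rightarrow> bool) \<Rightarrow> bool" where
  "word_representable V E \<longleftrightarrow> (\<exists>w. represents V E w)"

definition min_rep_length :: "'a set \<Rightarrow> ('a \<Rightarrow> 'a \<Rightarrow> bool) \<Rightarrow> nat" where
  "min_rep_length V E = (LEAST n. \<exists>w. represents V E w \<and> length w = n)"

definition is_clique :: "'a set \<Rightarrow> ('a \<Rightarrow> 'a \<Rightarrow> bool) \<Rightarrow> 'a set \<Rightarrow> bool" where
  "is_clique V E K \<longleftrightarrow> K \<subseteq> V \<and> (\<forall>x\<in>K. \<forall>y\<in>K. x \<noteq> y \<longrightarrow> E x y)"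

definition clique_number :: "'a set \<Rightarrow> ('a \<Rightarrow> 'a \<Rightarrow> bool) \<Rightarrow> nat" where
  "clique_number V E = Max (card ` {K. is_clique V E K})"

text \<open>Rooted product G \<circ> H (H rooted at r). Vertex (v,h) is the copy of h in the
  copy of H attached to v; the vertex v of G is identified with (v,r).\<close>
definition rooted_prod_V :: "'a set \<Rightarrow> 'b set \<Rightarrow> ('a \<times> 'b) set" where
  "rooted_prod_V VG VH = VG \<times> VH"

definition rooted_prod_E :: "('a \<Rightarrow> 'a \<Rightarrow> bool) \<Rightarrow> ('b \<Rightarrow> 'b \<Rightarrow> bool) \<Rightarrow> 'b
     \<Rightarrow> ('a \<times> 'b) \<Rightarrow> ('a \<times> 'b) \<Rightarrow> bool" where
  "rooted_prod_E EG EH r p q \<longleftrightarrow>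
     (fst p = fst q \<and> EH (snd p) (snd q)) \<or> (snd p = r \<and> snd q = r \<and> EG (fst p) (fst q))"

end

theory Submission
  imports Defs
begin

(*
  Take shortest words wG and wH representing G and H, and split wH = B r C at the last
  occurrence of the root r; let q = q1 r q2 list the letters of wH in the order of their last
  occurrences.  The word for the rooted product starts with one layer for each letter x of B r,
  consisting of the copies (u, x) with u in the order of first occurrences in wG.  It continues
  with one block in the copy of H at v for each occurrence of v in wG: C q1 r q2 q1 at the first
  occurrence, r q2 at the last one and r q2 q1 in between.

  Hence the copy at a vertex occurring k times in wG reads wH q^k if k >= 2 and wH q q1 if
  k = 1, and the root copy is wG preceded by powers of the first-occurrence order.  Appending a
  prefix of the last-occurrence order to a representing word, or prepending the first-occurrence
  order, again gives a representing word.  A non-root letter occurs twice in the first block of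
  its copy, so it alternates with no vertex of another copy.  The total length is
  |H| l(G) + |G| l(H) + (|H| - 1) s, where s counts the letters occurring exactly once in wG,
  and any two such letters alternate, i.e. they form a clique.
*)

lemma distinct_imp_distinct_adj: "distinct xs \<Longrightarrow> distinct_adj xs"
  by (induction xs) (auto simp: distinct_adj_Cons)

lemma count_list_map_eq_length_filter:
  "count_list (map f xs) y = length (filter (\<lambda>z. f z = y) xs)"
  by (induction xs) auto

lemma alternate_iff_distinct_adj:
  "alternate w x y \<longleftrightarrow> distinct_adj (filter (\<lambda>z. z = x \<or> z = y) w)"
  unfolding alternate_def Let_def distinct_adj_conv_nth ..

lemma alternate_commute: "alternate w x y \<longleftrightarrow> alternate w y x"
  by (simp add: alternate_iff_distinct_adj disj_commute)

lemma alternate_filter: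
  assumes "P x" "P y"
  shows "alternate (filter P w) x y \<longleftrightarrow> alternate w x y"
proof -
  have "filter (\<lambda>z. z = x \<or> z = y) (filter P w) = filter (\<lambda>z. z = x \<or> z = y) w"
    using assms by (auto simp: filter_filter intro: filter_cong)
  then show ?thesis
    by (simp add: alternate_iff_distinct_adj)
qed

lemma alternate_map:
  assumes inj: "inj_on f (insert x (insert y (set w)))"
  shows "alternate (map f w) (f x) (f y) \<longleftrightarrow> alternate w x y"
proof -
  have "filter (\<lambda>z. z = f x \<or> z = f y) (map f w) = map f (filter (\<lambda>z. z = x \<or> z = y) w)"
    using inj by (induction w) (auto simp: inj_on_def)
  moreover have "inj_on f (set (filter (\<lambda>z. z = x \<or> z = y) w))"
    using inj by (rule inj_on_subset) auto
  ultimately show ?thesis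
    by (simp add: alternate_iff_distinct_adj distinct_adj_map_iff)
qed

lemma alternate_rev: "alternate (rev w) x y \<longleftrightarrow> alternate w x y"
  by (simp add: alternate_iff_distinct_adj rev_filter[symmetric])

lemma not_alternate_if_repeated_in_factor:
  assumes "y \<notin> set e" and "2 \<le> count_list e x"
  shows "\<not> alternate (a @ e @ b) x y"
proof -
  let ?P = "\<lambda>z. z = x \<or> z = y"
  have "filter ?P e = filter ((=) x) e"
    using assms(1) by (induction e) auto
  also have "\<dots> = replicate (count_list e x) x"
    by (simp add: count_list_eq_length_filter replicate_length_filter)
  finally obtain n where "filter ?P e = x # x # replicate n x"
    using assms(2) by (metis add_2_eq_Suc' le_add_diff_inverse2 replicate_Suc)
  then show ?thesis
    by (simp add: alternate_iff_distinct_adj distinct_adj_append_iff)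
qed

lemma represents_rev: "represents V E w \<Longrightarrow> represents V E (rev w)"
  unfolding represents_def by (simp add: alternate_rev)

lemma distinct_adj_append_take_remdups:
  assumes "card (set u) \<noteq> 1"
  shows "distinct_adj (u @ take i (remdups u)) \<longleftrightarrow> distinct_adj u"
proof (cases "take i (remdups u) = []")
  case False
  then obtain a d where d: "remdups u = a # d" and "i > 0"
    by (cases "remdups u") auto
  have "card (set u) = length (remdups u)"
    by (simp add: length_remdups_card_conv)
  with assms d have "d \<noteq> []"
    by auto
  have "last u = last d"
    using remdups_filter_last[of "\<lambda>_. True" u] d \<open>d \<noteq> []\<close> by simp
  moreover have "a \<notin> set d"
    using distinct_remdups[of u] d by simp
  ultimately have "hd (take i (remdups u)) \<noteq> last u"
    using d \<open>i > 0\<close> \<open>d \<noteq> []\<close> by (auto simp: hd_take)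
  moreover have "distinct_adj (take i (remdups u))"
    by (simp add: distinct_imp_distinct_adj)
  ultimately show ?thesis
    using False by (auto simp: distinct_adj_append_iff)
qed auto

lemma represents_append_take_remdups:
  assumes rep: "represents V E w"
  shows "represents V E (w @ take i (remdups w))"
  unfolding represents_def
proof (intro conjI ballI impI)
  show "set (w @ take i (remdups w)) = V"
    using rep set_take_subset[of i "remdups w"] unfolding represents_def by auto
next
  fix x y assume "x \<in> V" "y \<in> V" "x \<noteq> y"
  define P where "P = (\<lambda>z. z = x \<or> z = y)"
  define u where "u = filter P w"
  have "set u = {x, y}"
    using rep \<open>x \<in> V\<close> \<open>y \<in> V\<close> unfolding u_def P_def represents_def by auto
  then have "card (set u) = 2"
    using \<open>x \<noteq> y\<close> by simp
  obtain j where "filter P (take i (remdups w)) = take j (remdups u)"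
    using filter_append[of P "take i (remdups w)" "drop i (remdups w)"]
    by (metis append_eq_conv_conj append_take_drop_id remdups_filter u_def)
  then have "alternate (w @ take i (remdups w)) x y \<longleftrightarrow> distinct_adj (u @ take j (remdups u))"
    by (simp add: alternate_iff_distinct_adj u_def P_def)
  also have "\<dots> \<longleftrightarrow> alternate w x y"
    using \<open>card (set u) = 2\<close> distinct_adj_append_take_remdups[of u j]
    by (simp add: alternate_iff_distinct_adj u_def P_def)
  finally show "E x y \<longleftrightarrow> alternate (w @ take i (remdups w)) x y"
    using rep \<open>x \<in> V\<close> \<open>y \<in> V\<close> \<open>x \<noteq> y\<close> unfolding represents_def by blast
qed

lemma represents_append_replicate_remdups:
  "represents V E w \<Longrightarrow> represents V E (w @ concat (replicate k (remdups w)) @ take i (remdups w))"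
proof (induction k arbitrary: w)
  case 0
  then show ?case
    by (simp add: represents_append_take_remdups)
next
  case (Suc k)
  have "represents V E (w @ remdups w)"
    using represents_append_take_remdups[OF Suc.prems, of "length (remdups w)"] by simp
  moreover have "remdups (w @ remdups w) = remdups w"
    by (subst remdups_append) auto
  ultimately show ?case
    using Suc.IH[of "w @ remdups w"] by simp
qed

lemma represents_replicate_rev_remdups_append:
  assumes "represents V E w"
  shows "represents V E (concat (replicate k (rev (remdups (rev w)))) @ w)"
  using represents_rev[OF represents_append_replicate_remdups[OF represents_rev[OF assms], of k 0]]
  by (simp add: rev_concat)

lemma is_clique_single_occurrences:
  assumes rep: "represents V E w"
  shows "is_clique V E {v \<in> V. count_list w v = 1}"
  unfolding is_clique_def
proof (intro conjI ballI impI)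
  fix u v assume u: "u \<in> {v \<in> V. count_list w v = 1}" and v: "v \<in> {v \<in> V. count_list w v = 1}"
    and "u \<noteq> v"
  let ?uv = "filter (\<lambda>z. z = u \<or> z = v) w"
  have "length ?uv = count_list w u + count_list w v"
    using \<open>u \<noteq> v\<close> by (induction w) auto
  moreover have "set ?uv = {u, v}"
    using rep u v unfolding represents_def by auto
  ultimately have "distinct ?uv"
    using u v \<open>u \<noteq> v\<close> by (intro card_distinct) simp
  then have "alternate w u v"
    by (simp add: alternate_iff_distinct_adj distinct_imp_distinct_adj)
  then show "E u v"
    using rep u v \<open>u \<noteq> v\<close> unfolding represents_def by blast
qed auto

lemma alternate_in_copy:
  assumes "fst x = v" "fst y = v"
  shows "alternate W x y \<longleftrightarrow> alternate (map snd (filter (\<lambda>z. fst z = v) W)) (snd x) (snd y)"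
proof -
  have "inj_on snd (insert x (insert y (set (filter (\<lambda>z. fst z = v) W))))"
    using assms by (auto simp: inj_on_def prod_eq_iff)
  then show ?thesis
    using alternate_map[of snd x y "filter (\<lambda>z. fst z = v) W"] alternate_filter[of "\<lambda>z. fst z = v" x y W]
      assms by simp
qed

lemma alternate_in_root_copy:
  assumes "snd x = r" "snd y = r"
  shows "alternate W x y \<longleftrightarrow> alternate (map fst (filter (\<lambda>z. snd z = r) W)) (fst x) (fst y)"
proof -
  have "inj_on fst (insert x (insert y (set (filter (\<lambda>z. snd z = r) W))))"
    using assms by (auto simp: inj_on_def prod_eq_iff)
  then show ?thesis
    using alternate_map[of fst x y "filter (\<lambda>z. snd z = r) W"] alternate_filter[of "\<lambda>z. snd z = r" x y W]
      assms by simp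
qed

lemma represents_rooted_prod:
  assumes fst_W: "fst ` set W \<subseteq> VG"
    and copies: "\<And>v. v \<in> VG \<Longrightarrow> represents VH EH (map snd (filter (\<lambda>z. fst z = v) W))"
    and root: "represents VG EG (map fst (filter (\<lambda>z. snd z = r) W))"
    and cross: "\<And>v h y. v \<in> VG \<Longrightarrow> h \<in> VH \<Longrightarrow> h \<noteq> r \<Longrightarrow> fst y \<noteq> v \<Longrightarrow> \<not> alternate W (v, h) y"
  shows "represents (VG \<times> VH) (rooted_prod_E EG EH r) W"
  unfolding represents_def
proof (intro conjI ballI impI)
  have "z \<in> set W \<longleftrightarrow> snd z \<in> set (map snd (filter (\<lambda>z'. fst z' = fst z) W))" if "fst z \<in> VG" for z
    by (cases z) (auto simp: image_iff)
  then show "set W = VG \<times> VH"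
    using fst_W copies unfolding represents_def by (auto simp del: set_map)
next
  fix x y assume "x \<in> VG \<times> VH" "y \<in> VG \<times> VH" "x \<noteq> y"
  then obtain v a u b where xy: "x = (v, a)" "y = (u, b)" "v \<in> VG" "u \<in> VG" "a \<in> VH" "b \<in> VH"
    by auto
  consider "v = u" | "v \<noteq> u" "a = r" "b = r" | "v \<noteq> u" "a \<noteq> r" | "v \<noteq> u" "b \<noteq> r"
    by blast
  then show "rooted_prod_E EG EH r x y \<longleftrightarrow> alternate W x y"
  proof cases
    case 1
    then show ?thesis
      using copies[of v] alternate_in_copy[of x v y W] xy \<open>x \<noteq> y\<close>
      unfolding rooted_prod_E_def represents_def by auto
  next
    case 2
    then show ?thesis
      using root alternate_in_root_copy[of x r y W] xy
      unfolding rooted_prod_E_def represents_def by auto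
  next
    case 3
    then show ?thesis
      using cross[of v a y] xy unfolding rooted_prod_E_def by auto
  next
    case 4
    then show ?thesis
      using cross[of u b x] alternate_commute[of W x y] xy unfolding rooted_prod_E_def by auto
  qed
qed

lemma length_eq_sum_copies:
  assumes "fst ` set W \<subseteq> V" "finite V"
  shows "length W = (\<Sum>v\<in>V. length (map snd (filter (\<lambda>z. fst z = v) W)))"
  using sum_count_set[of "map fst W" V] assms by (simp add: count_list_map_eq_length_filter)

lemma min_rep_length_le: "represents V E w \<Longrightarrow> min_rep_length V E \<le> length w"
  unfolding min_rep_length_def by (rule Least_le) blast

lemma min_rep_length_attained:
  assumes "word_representable V E"
  obtains w where "represents V E w" "length w = min_rep_length V E"
  using assms LeastI_ex[of "\<lambda>n. \<exists>w. represents V E w \<and> length w = n"]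
  unfolding word_representable_def min_rep_length_def by blast

lemma card_le_clique_number:
  assumes "finite V" "is_clique V E K"
  shows "card K \<le> clique_number V E"
proof -
  have "finite {K. is_clique V E K}"
    using assms(1) by (rule finite_subset[rotated, OF finite_Pow_iff[THEN iffD2]]) (auto simp: is_clique_def)
  then show ?thesis
    unfolding clique_number_def using assms(2) by (intro Max_ge) auto
qed

lemma copy_of_block:
  "map snd (filter (\<lambda>z. fst z = v) (map (Pair x) e)) = (if x = v then e else [])"
  by (induction e) auto

lemma copy_of_rows:
  assumes "distinct P" "v \<in> set P"
  shows "map snd (filter (\<lambda>z. fst z = v) [(u, h). h \<leftarrow> hs, u \<leftarrow> P]) = hs"
proof -
  have row: "map snd (filter (\<lambda>z. fst z = v) [(u, h). u \<leftarrow> P]) = [h]" for h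
    using assms by (induction P) (auto simp: filter_empty_conv)
  show ?thesis
    by (induction hs) (simp_all add: row)
qed

lemma root_of_rows:
  "map fst (filter (\<lambda>z. snd z = r) [(u, h). h \<leftarrow> hs, u \<leftarrow> P]) = concat (replicate (count_list hs r) P)"
proof -
  have row: "map fst (filter (\<lambda>z. snd z = r) [(u, h). u \<leftarrow> P]) = (if h = r then P else [])" for h
    by (induction P) auto
  show ?thesis
    by (induction hs) (simp_all add: row)
qed

(* remdups keeps the last occurrence of each letter, so q1 @ r # q2 is the last-occurrence order
   of B @ r # C. *)
locale last_root_split =
  fixes B C :: "'b list" and r :: 'b
  assumes r_notin_C: "r \<notin> set C"
begin

definition q1 :: "'b list" where
  "q1 = remdups (filter (\<lambda>x. x \<notin> set (r # C)) B)"

definition q2 :: "'b list" where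
  "q2 = remdups C"

lemma remdups_split: "remdups (B @ r # C) = q1 @ r # q2"
proof -
  have "remdups (xs @ ys) = remdups (filter (\<lambda>x. x \<notin> set ys) xs) @ remdups ys" for xs ys :: "'b list"
    by (induction xs) auto
  then show ?thesis
    using r_notin_C by (simp add: q1_def q2_def)
qed

definition block :: "bool \<Rightarrow> bool \<Rightarrow> 'b list" where
  "block first_occ last_occ =
     (if first_occ then C @ q1 @ r # q2 @ q1 else if last_occ then r # q2 else r # q2 @ q1)"

fun blocks :: "'a set \<Rightarrow> 'a list \<Rightarrow> ('a \<times> 'b) list" where
  "blocks S [] = []"
| "blocks S (x # xs) = map (Pair x) (block (x \<notin> S) (x \<notin> set xs)) @ blocks (insert x S) xs"

definition product_word :: "'a list \<Rightarrow> ('a \<times> 'b) list" where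
  "product_word w = [(u, x). x \<leftarrow> B @ [r], u \<leftarrow> rev (remdups (rev w))] @ blocks {} w"

lemma blocks_copy_seen:
  assumes "v \<in> S"
  shows "map snd (filter (\<lambda>z. fst z = v) (blocks S xs)) =
    (if count_list xs v = 0 then [] else r # q2 @ concat (replicate (count_list xs v - 1) (q1 @ r # q2)))"
  using assms
proof (induction xs arbitrary: S)
  case (Cons x xs)
  then show ?case
    by (cases "count_list xs v") (auto simp: copy_of_block block_def count_list_0_iff)
qed simp

lemma blocks_copy_first:
  assumes "v \<notin> S" "v \<in> set xs"
  shows "map snd (filter (\<lambda>z. fst z = v) (blocks S xs)) =
    C @ q1 @ r # q2 @ q1 @
      (if count_list xs v = 1 then [] else r # q2 @ concat (replicate (count_list xs v - 2) (q1 @ r # q2)))"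
  using assms
proof (induction xs arbitrary: S)
  case (Cons x xs)
  show ?case
  proof (cases "x = v")
    case True
    then show ?thesis
      using Cons.prems blocks_copy_seen[of v "insert x S" xs]
      by (simp add: copy_of_block block_def comp_def)
  next
    case False
    then show ?thesis
      using Cons by (simp add: copy_of_block)
  qed
qed simp

lemma product_word_copy:
  assumes "v \<in> set w"
  shows "map snd (filter (\<lambda>z. fst z = v) (product_word w)) =
    (if count_list w v = 1 then (B @ r # C) @ remdups (B @ r # C) @ q1
     else (B @ r # C) @ concat (replicate (count_list w v) (remdups (B @ r # C))))"
proof -
  have "map snd (filter (\<lambda>z. fst z = v) [(u, x). x \<leftarrow> B @ [r], u \<leftarrow> rev (remdups (rev w))])
      = B @ [r]"
    using assms by (intro copy_of_rows) auto
  then have copy: "map snd (filter (\<lambda>z. fst z = v) (product_word w)) =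
      B @ [r] @ map snd (filter (\<lambda>z. fst z = v) (blocks {} w))"
    by (simp only: product_word_def filter_append map_append append_assoc)
  consider "count_list w v = 1" | m where "count_list w v = Suc (Suc m)"
    using assms count_list_0_iff[of w v] by (metis One_nat_def not0_implies_Suc)
  then show ?thesis
  proof cases
    case 1
    then show ?thesis
      using copy blocks_copy_first[of v "{}" w] assms by (simp add: remdups_split)
  next
    case 2
    then show ?thesis
      using copy blocks_copy_first[of v "{}" w] assms by (simp add: remdups_split)
  qed
qed

lemma blocks_root:
  "map fst (filter (\<lambda>z. snd z = r) (blocks S xs)) = xs"
proof (induction xs arbitrary: S)
  case (Cons x xs)
  have "map fst (filter (\<lambda>z. snd z = r) (map (Pair x) e)) = replicate (count_list e r) x" for e
    by (induction e) auto
  moreover have "count_list (block first_occ last_occ) r = 1" for first_occ last_occ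
    using r_notin_C by (simp add: block_def q1_def q2_def)
  ultimately show ?case
    using Cons.IH by simp
qed simp

lemma product_word_root:
  "map fst (filter (\<lambda>z. snd z = r) (product_word w)) =
    concat (replicate (count_list (B @ [r]) r) (rev (remdups (rev w)))) @ w"
  using root_of_rows[where r = r and hs = "B @ [r]" and P = "rev (remdups (rev w))"]
  by (simp add: product_word_def blocks_root)

lemma fst_set_blocks: "fst ` set (blocks S xs) \<subseteq> set xs"
  by (induction xs arbitrary: S) auto

lemma fst_set_product_word: "fst ` set (product_word w) \<subseteq> set w"
  using fst_set_blocks[of "{}" w] by (auto simp: product_word_def)

lemma blocks_split:
  "\<exists>a b. blocks S (ys @ x # zs) = a @ map (Pair x) (block (x \<notin> S \<union> set ys) (x \<notin> set zs)) @ b"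
proof (induction ys arbitrary: S)
  case (Cons y ys)
  then obtain a b where "blocks (insert y S) (ys @ x # zs) =
      a @ map (Pair x) (block (x \<notin> insert y S \<union> set ys) (x \<notin> set zs)) @ b"
    by blast
  then have "blocks S ((y # ys) @ x # zs) = (map (Pair y) (block (y \<notin> S) (y \<notin> set (ys @ x # zs))) @ a)
      @ map (Pair x) (block (x \<notin> S \<union> set (y # ys)) (x \<notin> set zs)) @ b"
    by simp
  then show ?case
    by blast
qed fastforce

lemma product_word_cross:
  assumes "v \<in> set w" "h \<in> set (B @ r # C)" "h \<noteq> r" "fst y \<noteq> v"
  shows "\<not> alternate (product_word w) (v, h) y"
proof -
  obtain ys zs where w: "w = ys @ v # zs" and "v \<notin> set ys"
    using split_list_first[OF assms(1)] by blast
  then obtain a b where "blocks {} w = a @ map (Pair v) (block True (v \<notin> set zs)) @ b"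
    using blocks_split[of "{}" ys v zs] by auto
  then have W: "product_word w =
      ([(u, x). x \<leftarrow> B @ [r], u \<leftarrow> rev (remdups (rev w))] @ a) @ map (Pair v) (block True (v \<notin> set zs)) @ b"
    by (simp add: product_word_def)
  have "h \<in> set q1 \<or> h \<in> set q2 \<inter> set C"
    using assms(2,3) arg_cong[OF remdups_split, of set] by (auto simp: q2_def)
  then have "count_list q1 h \<noteq> 0 \<or> count_list q2 h \<noteq> 0 \<and> count_list C h \<noteq> 0"
    by (simp add: count_list_0_iff)
  then have "2 \<le> count_list (block True (v \<notin> set zs)) h"
    by (auto simp: block_def)
  moreover have "count_list (map (Pair v) e) (v, h) = count_list e h" for e
    by (induction e) auto
  moreover have "y \<notin> set (map (Pair v) e)" for e
    using assms(4) by auto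
  ultimately show ?thesis
    unfolding W by (intro not_alternate_if_repeated_in_factor) auto
qed

lemma product_word_represents:
  assumes rep_G: "represents VG EG w" and rep_H: "represents VH EH (B @ r # C)"
  shows "represents (VG \<times> VH) (rooted_prod_E EG EH r) (product_word w)"
proof (rule represents_rooted_prod)
  have set_w: "set w = VG" and set_wH: "set (B @ r # C) = VH"
    using rep_G rep_H unfolding represents_def by auto
  then show "fst ` set (product_word w) \<subseteq> VG"
    using fst_set_product_word[of w] by simp
  have q1: "take (length q1) (remdups (B @ r # C)) = q1"
    by (simp add: remdups_split)
  show "represents VH EH (map snd (filter (\<lambda>z. fst z = v) (product_word w)))" if "v \<in> VG" for v
  proof (cases "count_list w v = 1")
    case True
    then show ?thesis
      using product_word_copy[of v w] that set_w
        represents_append_replicate_remdups[OF rep_H, of 1 "length q1"]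
      by (simp add: q1)
  next
    case False
    then show ?thesis
      using product_word_copy[of v w] that set_w
        represents_append_replicate_remdups[OF rep_H, of "count_list w v" 0]
      by simp
  qed
  show "represents VG EG (map fst (filter (\<lambda>z. snd z = r) (product_word w)))"
    unfolding product_word_root by (rule represents_replicate_rev_remdups_append[OF rep_G])
  show "\<not> alternate (product_word w) (v, h) y" if "v \<in> VG" "h \<in> VH" "h \<noteq> r" "fst y \<noteq> v" for v h y
    using that unfolding set_w[symmetric] set_wH[symmetric] by (rule product_word_cross)
qed

lemma product_word_length:
  defines "n \<equiv> card (set (B @ r # C))"
  shows "length (product_word w) \<le> n * length w + card (set w) * length (B @ r # C)
    + (n - 1) * card {v \<in> set w. count_list w v = 1}"
proof -
  let ?copy = "\<lambda>v. map snd (filter (\<lambda>z. fst z = v) (product_word w))"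
  have n: "length (remdups (B @ r # C)) = n"
    unfolding n_def by (rule length_remdups_card_conv)
  then have "length q1 \<le> n - 1"
    by (simp add: remdups_split)
  then have "length (?copy v) \<le> length (B @ r # C) + n * count_list w v
      + (if count_list w v = 1 then n - 1 else 0)" if "v \<in> set w" for v
    using product_word_copy[OF that] n by (simp add: length_concat sum_list_replicate)
  then have "length (product_word w) \<le> (\<Sum>v\<in>set w. length (B @ r # C) + n * count_list w v
      + (if count_list w v = 1 then n - 1 else 0))"
    unfolding length_eq_sum_copies[OF fst_set_product_word finite_set] by (rule sum_mono)
  also have "\<dots> = card (set w) * length (B @ r # C) + n * (\<Sum>v\<in>set w. count_list w v)
      + (n - 1) * card {v \<in> set w. count_list w v = 1}"
    by (simp only: sum.distrib sum_constant sum_distrib_left sum.If_cases finite_set Int_def) simp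
  also have "\<dots> = card (set w) * length (B @ r # C) + n * length w
      + (n - 1) * card {v \<in> set w. count_list w v = 1}"
    by (simp add: sum_count_set)
  finally show ?thesis
    by simp
qed

end

theorem mainTheorem11:
  fixes VG :: "'a set" and EG :: "'a \<Rightarrow> 'a \<Rightarrow> bool"
    and VH :: "'b set" and EH :: "'b \<Rightarrow> 'b \<Rightarrow> bool" and r :: 'b
  assumes "simple_graph VG EG" and "simple_graph VH EH"
    and "word_representable VG EG" and "word_representable VH EH"
    and "r \<in> VH"
  shows "min_rep_length (rooted_prod_V VG VH) (rooted_prod_E EG EH r)
         \<le> card VH * min_rep_length VG EG + card VG * min_rep_length VH EH
           + (card VH - 1) * clique_number VG EG"
proof -
  obtain wG where rep_G: "represents VG EG wG" and len_G: "length wG = min_rep_length VG EG"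
    using assms(3) by (rule min_rep_length_attained)
  obtain wH where rep_H: "represents VH EH wH" and len_H: "length wH = min_rep_length VH EH"
    using assms(4) by (rule min_rep_length_attained)
  have set_G: "set wG = VG" and set_H: "set wH = VH"
    using rep_G rep_H unfolding represents_def by auto
  then obtain B C where wH: "wH = B @ r # C" and "r \<notin> set C"
    using split_list_last[of r wH] assms(5) by blast
  then interpret last_root_split B C r
    by unfold_locales
  have "min_rep_length (rooted_prod_V VG VH) (rooted_prod_E EG EH r) \<le> length (product_word wG)"
    unfolding rooted_prod_V_def
    by (rule min_rep_length_le, rule product_word_represents[OF rep_G rep_H[unfolded wH]])
  also have "\<dots> \<le> card VH * length wG + card VG * length wH
      + (card VH - 1) * card {v \<in> VG. count_list wG v = 1}"
    using product_word_length[of wG] set_G set_H wH by simp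
  also have "\<dots> \<le> card VH * min_rep_length VG EG + card VG * min_rep_length VH EH
      + (card VH - 1) * clique_number VG EG"
    using card_le_clique_number[OF _ is_clique_single_occurrences[OF rep_G]] set_G[symmetric] len_G len_H
    by simp
  finally show ?thesis .
qed

end
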